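(* For every integer $n\ge 7$, the wheel $W_{1,n}$ satisfies $$\dim_{n\ell}(W_{1,n})=\left\lfloor \frac{2n}{5}\right\rfloor.$$
   Context: The wheel $W_{1,n}=K_1+C_n$ is obtained from the cycle $C_n$ by adding one vertex (the center) adjacent to all cycle vertices. $d(u,v)$ is the shortest-path distance. A set $X$ of vertices resolves two vertices $u,v$ if some $x\in X$ satisfies $d(u,x)\neq d(v,x)$. $X$ is a nonlocal resolving set if it resolves every pair of distinct non-adjacent vertices; the nonlocal metric dimension $\dim_{n\ell}$ is the minimum size of a nonlocal resolving set. *)

theory Defs
  imports Main
begin

text \<open>A (simple, undirected) graph is given by a vertex set V and a symmetric
irreflexive adjacency relation E on V.\<close>

inductive walk_len :: "'a set \<Rightarrow> ('a \<Rightarrow> 'a \<Rightarrow> bool) \<Rightarrow> nat \<Rightarrow> 'a \<Rightarrow> 'a \<Rightarrow> bool"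
  for V E where
  walk0: "u \<in> V \<Longrightarrow> walk_len V E 0 u u"
| walkS: "u \<in> V \<Longrightarrow> E u w \<Longrightarrow> walk_len V E k w v \<Longrightarrow> walk_len V E (Suc k) u v"

text \<open>Shortest-path distance (used only for connected graphs).\<close>
definition gdist :: "'a set \<Rightarrow> ('a \<Rightarrow> 'a \<Rightarrow> bool) \<Rightarrow> 'a \<Rightarrow> 'a \<Rightarrow> nat" where
  "gdist V E u v = (LEAST k. walk_len V E k u v)"

definition resolves :: "'a set \<Rightarrow> ('a \<Rightarrow> 'a \<Rightarrow> bool) \<Rightarrow> 'a set \<Rightarrow> 'a \<Rightarrow> 'a \<Rightarrow> bool" where
  "resolves V E X u v \<longleftrightarrow> (\<exists>x\<in>X. gdist V E u x \<noteq> gdist V E v x)"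

definition nonlocal_resolving :: "'a set \<Rightarrow> ('a \<Rightarrow> 'a \<Rightarrow> bool) \<Rightarrow> 'a set \<Rightarrow> bool" where
  "nonlocal_resolving V E X \<longleftrightarrow> X \<subseteq> V \<and>
     (\<forall>u\<in>V. \<forall>v\<in>V. u \<noteq> v \<and> \<not> E u v \<longrightarrow> resolves V E X u v)"

definition nl_dim :: "'a set \<Rightarrow> ('a \<Rightarrow> 'a \<Rightarrow> bool) \<Rightarrow> nat" where
  "nl_dim V E = (LEAST k. \<exists>X. nonlocal_resolving V E X \<and> finite X \<and> card X = k)"

text \<open>The wheel W_{1,n}: vertex 0 is the center, vertices 1..n form the cycle C_n
(i adjacent to i+1, and n adjacent to 1).\<close>
definition wheel_V :: "nat \<Rightarrow> nat set" where
  "wheel_V n = {0..n}"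

definition wheel_E :: "nat \<Rightarrow> nat \<Rightarrow> nat \<Rightarrow> bool" where
  "wheel_E n u v \<longleftrightarrow> u \<in> {0..n} \<and> v \<in> {0..n} \<and> u \<noteq> v \<and>
     (u = 0 \<or> v = 0 \<or> v = u + 1 \<or> u = v + 1 \<or> (u = 1 \<and> v = n) \<or> (u = n \<and> v = 1))"

end

theory Submission
  imports Defs
begin

text \<open>Through the centre every two vertices of the wheel are at distance at most 2, so a vertex
  resolves two non-adjacent rim vertices exactly when it is one of them or is adjacent to exactly
  one of them; the centre never does. Lower bound: a rim vertex outside X is determined up to
  adjacency by its trace, the set of its neighbours in X. As the rim is a triangle-free cycle, at
  most two such vertices have an empty trace, singleton traces are pairwise distinct, and each
  element of X lies in at most two traces; double counting gives 2(n - k) \<le> 3k + 4 for the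
  k rim vertices of X. Upper bound: the rim vertices congruent to 0 or 3 modulo 5, adjusted
  near the wrap-around, form a set of size \<lfloor>2n/5\<rfloor> in which every non-adjacent pair
  outside it is separated by a neighbour of one of its two vertices.\<close>

lemma walk_len_0_iff: "walk_len V E 0 u v \<longleftrightarrow> u = v \<and> u \<in> V"
  by (auto elim: walk_len.cases intro: walk_len.intros)

lemma walk_len_1_adjacent: "walk_len V E (Suc 0) u v \<Longrightarrow> E u v"
  by (auto elim!: walk_len.cases)

lemma gdist_universal_vertex:
  assumes "c \<in> V" and universal: "\<And>x. x \<in> V \<Longrightarrow> x \<noteq> c \<Longrightarrow> E x c \<and> E c x"
    and "u \<in> V" "v \<in> V"
  shows "gdist V E u v = (if u = v then 0 else if E u v then 1 else 2)"
    (is "_ = ?d")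
proof -
  have walk: "walk_len V E ?d u v"
  proof -
    have v: "walk_len V E 0 v v" using \<open>v \<in> V\<close> by (rule walk0)
    consider "u = v" | "u \<noteq> v" "E u v" | "u \<noteq> v" "\<not> E u v" by blast
    then show ?thesis
    proof cases
      case 3
      then have "u \<noteq> c" "v \<noteq> c" using universal assms(3,4) by auto
      then have "E u c" "E c v" using universal assms(3,4) by auto
      then show ?thesis
        using 3 v \<open>c \<in> V\<close> \<open>u \<in> V\<close> by (auto simp: numeral_2_eq_2 intro!: walkS)
    qed (use v \<open>u \<in> V\<close> in \<open>auto intro: walkS\<close>)
  qed
  have "?d \<le> k" if "walk_len V E k u v" for k
    using that walk_len_0_iff[of V E u v] walk_len_1_adjacent[of V E u v]
    by (cases "k < 2") (auto simp: less_2_cases_iff)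
  with walk show ?thesis
    unfolding gdist_def by (rule Least_equality)
qed

lemma resolves_universal_vertex_iff:
  assumes "c \<in> V" and universal: "\<And>x. x \<in> V \<Longrightarrow> x \<noteq> c \<Longrightarrow> E x c \<and> E c x"
    and "X \<subseteq> V" "u \<in> V" "v \<in> V" "u \<noteq> v"
  shows "resolves V E X u v \<longleftrightarrow> (\<exists>x\<in>X. x = u \<or> x = v \<or> E u x \<noteq> E v x)"
proof -
  have dist: "gdist V E a b = (if a = b then 0 else if E a b then 1 else 2)"
    if "a \<in> V" "b \<in> V" for a b
    using gdist_universal_vertex[of c V E a b] assms(1) universal that by blast
  have "gdist V E u x \<noteq> gdist V E v x \<longleftrightarrow> x = u \<or> x = v \<or> E u x \<noteq> E v x" if "x \<in> X" for x
  proof -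
    have "x \<in> V" using that \<open>X \<subseteq> V\<close> by blast
    then show ?thesis
      using dist[OF \<open>u \<in> V\<close>] dist[OF \<open>v \<in> V\<close>] \<open>u \<noteq> v\<close>
      by auto
  qed
  then show ?thesis
    unfolding resolves_def by auto
qed

lemma card_le_2_if_no_three_distinct:
  assumes "finite S" and "\<And>a b c. a \<in> S \<Longrightarrow> b \<in> S \<Longrightarrow> c \<in> S \<Longrightarrow> a = b \<or> b = c \<or> a = c"
  shows "card S \<le> 2"
proof (rule ccontr)
  assume "\<not> card S \<le> 2"
  then obtain T where "T \<subseteq> S" "card T = 3"
    by (metis not_le Suc_leI numeral_3_eq_3 numeral_2_eq_2 obtain_subset_with_card_n)
  then obtain a b c where "T = {a, b, c}" "a \<noteq> b" "b \<noteq> c" "a \<noteq> c"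
    by (auto simp: card_3_iff)
  with assms(2)[of a b c] \<open>T \<subseteq> S\<close> show False by auto
qed

locale nonlocal_separating =
  fixes C :: "'a set" and E :: "'a \<Rightarrow> 'a \<Rightarrow> bool" and X :: "'a set"
  assumes finite_C: "finite C"
    and X_subset: "X \<subseteq> C"
    and sym: "E u v \<Longrightarrow> E v u"
    and triangle_free: "a \<in> C \<Longrightarrow> b \<in> C \<Longrightarrow> c \<in> C \<Longrightarrow> E a b \<Longrightarrow> E b c \<Longrightarrow> E a c
      \<Longrightarrow> a = b \<or> b = c \<or> a = c"
    and degree_le_2: "x \<in> C \<Longrightarrow> card {y \<in> C. E y x} \<le> 2"
    and separating: "u \<in> C - X \<Longrightarrow> v \<in> C - X \<Longrightarrow> u \<noteq> v \<Longrightarrow> \<not> E u v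
      \<Longrightarrow> {x \<in> X. E u x} \<noteq> {x \<in> X. E v x}"
begin

definition trace :: "'a \<Rightarrow> 'a set" where
  "trace y = {x \<in> X. E y x}"

lemma finite_X: "finite X"
  using X_subset finite_C by (rule finite_subset)

lemma finite_trace: "finite (trace y)"
  unfolding trace_def using finite_X by simp

lemma equal_trace_adjacent:
  "u \<in> C - X \<Longrightarrow> v \<in> C - X \<Longrightarrow> trace u = trace v \<Longrightarrow> u = v \<or> E u v"
  using separating unfolding trace_def by blast

lemma card_empty_trace_le_2: "card {y \<in> C - X. trace y = {}} \<le> 2"
proof (rule card_le_2_if_no_three_distinct)
  fix a b c assume "a \<in> {y \<in> C - X. trace y = {}}" "b \<in> {y \<in> C - X. trace y = {}}"
    "c \<in> {y \<in> C - X. trace y = {}}"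
  then show "a = b \<or> b = c \<or> a = c"
    using equal_trace_adjacent[of a b] equal_trace_adjacent[of b c] equal_trace_adjacent[of a c]
      triangle_free[of a b c] by auto
qed (use finite_C in simp)

text \<open>Two vertices sharing the single trace element x would form a triangle with x.\<close>

lemma card_singleton_trace_le: "card {y \<in> C - X. card (trace y) = 1} \<le> card X"
proof -
  let ?Y1 = "{y \<in> C - X. card (trace y) = 1}"
  define g where "g y = the_elem (trace y)" for y
  have trace_eq: "trace y = {g y}" if "y \<in> ?Y1" for y
  proof -
    from that have "card (trace y) = 1" by simp
    then obtain x where "trace y = {x}" by (rule card_1_singletonE)
    then show ?thesis by (simp add: g_def)
  qed
  have "inj_on g ?Y1"
  proof (rule inj_onI)
    fix a b assume a: "a \<in> ?Y1" and b: "b \<in> ?Y1" and same: "g a = g b"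
    have ta: "trace a = {g a}" and tb: "trace b = {g a}"
      using trace_eq[OF a] trace_eq[OF b] same by simp_all
    then have adjacent: "a = b \<or> E a b"
      using a b equal_trace_adjacent[of a b] by simp
    have x: "g a \<in> X" "E a (g a)" "E b (g a)"
      using ta tb unfolding trace_def by blast+
    have "a \<in> C" "b \<in> C" "g a \<in> C" "a \<noteq> g a" "b \<noteq> g a"
      using a b x(1) X_subset by auto
    show "a = b"
    proof (rule ccontr)
      assume "a \<noteq> b"
      with adjacent have "E a b" by simp
      with triangle_free[OF \<open>a \<in> C\<close> \<open>g a \<in> C\<close> \<open>b \<in> C\<close> x(2) sym[OF x(3)]]
      show False using \<open>a \<noteq> b\<close> \<open>a \<noteq> g a\<close> \<open>b \<noteq> g a\<close> by simp
    qed
  qed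
  moreover have "g ` ?Y1 \<subseteq> X"
    using trace_eq unfolding trace_def by blast
  ultimately show ?thesis
    using finite_X by (rule card_inj_on_le)
qed

lemma sum_card_trace_le: "(\<Sum>y \<in> C - X. card (trace y)) \<le> 2 * card X"
proof -
  have "(\<Sum>y \<in> C - X. card (trace y)) = (\<Sum>y \<in> C - X. \<Sum>x \<in> X. if E y x then 1 else 0)"
    unfolding trace_def using finite_X by (simp add: sum.If_cases Int_def conj_commute)
  also have "\<dots> = (\<Sum>x \<in> X. \<Sum>y \<in> C - X. if E y x then 1 else 0)"
    by (rule sum.swap)
  also have "\<dots> = (\<Sum>x \<in> X. card {y \<in> C - X. E y x})"
    using finite_C by (simp add: sum.If_cases Int_def conj_commute)
  also have "\<dots> \<le> (\<Sum>x \<in> X. 2)"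
  proof (rule sum_mono)
    fix x assume "x \<in> X"
    have "card {y \<in> C - X. E y x} \<le> card {y \<in> C. E y x}"
      using finite_C by (intro card_mono) auto
    also have "\<dots> \<le> 2" using degree_le_2 \<open>x \<in> X\<close> X_subset by blast
    finally show "card {y \<in> C - X. E y x} \<le> 2" .
  qed
  finally show ?thesis by simp
qed

text \<open>Each vertex y outside X has weight 2 \<le> |trace y| + [|trace y| = 1] + 2 [trace y = {}],
  and the three sums are bounded by the previous lemmas.\<close>

theorem card_lower_bound: "2 * card C \<le> 5 * card X + 4"
proof -
  let ?Y = "C - X"
  have fin: "finite ?Y" using finite_C by simp
  have "2 * card ?Y = (\<Sum>y \<in> ?Y. 2::nat)" by simp
  also have "\<dots> \<le> (\<Sum>y \<in> ?Y. card (trace y) + (if card (trace y) = 1 then 1 else 0)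
      + 2 * (if trace y = {} then 1 else 0))"
  proof (rule sum_mono)
    fix y
    have "card (trace y) = 0 \<longleftrightarrow> trace y = {}" using finite_trace by simp
    then show "2 \<le> card (trace y) + (if card (trace y) = 1 then 1 else 0)
      + 2 * (if trace y = {} then 1 else 0)" by auto
  qed
  also have "\<dots> = (\<Sum>y \<in> ?Y. card (trace y)) + card {y \<in> ?Y. card (trace y) = 1}
      + 2 * card {y \<in> ?Y. trace y = {}}"
    using fin by (simp add: sum.distrib sum_distrib_left[symmetric] sum.If_cases Int_def conj_commute)
  finally have "2 * card ?Y \<le> 3 * card X + 4"
    using sum_card_trace_le card_singleton_trace_le card_empty_trace_le_2 by linarith
  moreover have "card ?Y = card C - card X"
    using finite_C X_subset by (simp add: card_Diff_subset finite_subset)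
  moreover have "card X \<le> card C"
    using finite_C X_subset by (rule card_mono)
  ultimately show ?thesis by linarith
qed

end

lemma wheel_E_sym: "wheel_E n u v \<Longrightarrow> wheel_E n v u"
  unfolding wheel_E_def by auto

lemma wheel_center_adjacent: "x \<in> wheel_V n \<Longrightarrow> x \<noteq> 0 \<Longrightarrow> wheel_E n x 0 \<and> wheel_E n 0 x"
  unfolding wheel_E_def wheel_V_def by auto

lemma wheel_resolves_iff:
  assumes "X \<subseteq> wheel_V n" "u \<in> wheel_V n" "v \<in> wheel_V n" "u \<noteq> v"
  shows "resolves (wheel_V n) (wheel_E n) X u v
    \<longleftrightarrow> (\<exists>x\<in>X. x = u \<or> x = v \<or> wheel_E n u x \<noteq> wheel_E n v x)"
  by (rule resolves_universal_vertex_iff[of 0])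
    (use assms wheel_center_adjacent in \<open>auto simp: wheel_V_def\<close>)

lemma wheel_nonadjacent_on_rim:
  "u \<in> wheel_V n \<Longrightarrow> v \<in> wheel_V n \<Longrightarrow> u \<noteq> v \<Longrightarrow> \<not> wheel_E n u v
    \<Longrightarrow> u \<in> {1..n} \<and> v \<in> {1..n}"
  unfolding wheel_E_def wheel_V_def by auto

lemma wheel_rim_degree_le_2:
  assumes "x \<noteq> 0"
  shows "card {y \<in> {1..n}. wheel_E n y x} \<le> 2"
proof -
  have "{y \<in> {1..n}. wheel_E n y x}
      \<subseteq> {if x = 1 then n else x - 1, if x = n then 1 else x + 1}"
    using assms unfolding wheel_E_def by auto
  then have "card {y \<in> {1..n}. wheel_E n y x}
      \<le> card {if x = 1 then n else x - 1, if x = n then 1 else x + 1}"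
    by (intro card_mono) auto
  also have "\<dots> \<le> 2" by (simp add: card_insert_le_m1)
  finally show ?thesis .
qed

text \<open>The centre resolves no non-adjacent pair, so the bound only counts rim vertices.\<close>

lemma wheel_nonlocal_resolving_card_ge:
  assumes "4 \<le> n" and resolving: "nonlocal_resolving (wheel_V n) (wheel_E n) X"
  shows "2 * n \<le> 5 * card (X \<inter> {1..n}) + 4"
proof -
  interpret nonlocal_separating "{1..n}" "wheel_E n" "X \<inter> {1..n}"
  proof
    show "finite {1..n}" "X \<inter> {1..n} \<subseteq> {1..n}" by auto
    show "wheel_E n v u" if "wheel_E n u v" for u v
      using that by (rule wheel_E_sym)
    show "a = b \<or> b = c \<or> a = c"
      if "a \<in> {1..n}" "b \<in> {1..n}" "c \<in> {1..n}" "wheel_E n a b" "wheel_E n b c" "wheel_E n a c"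
      for a b c
      using that \<open>4 \<le> n\<close> unfolding wheel_E_def by auto
    show "card {y \<in> {1..n}. wheel_E n y x} \<le> 2" if "x \<in> {1..n}" for x
      using that by (intro wheel_rim_degree_le_2) auto
  next
    fix u v assume u: "u \<in> {1..n} - X \<inter> {1..n}" and v: "v \<in> {1..n} - X \<inter> {1..n}"
      and "u \<noteq> v" "\<not> wheel_E n u v"
    then have "resolves (wheel_V n) (wheel_E n) X u v"
      using resolving unfolding nonlocal_resolving_def wheel_V_def by auto
    then obtain x where "x \<in> X" "x = u \<or> x = v \<or> wheel_E n u x \<noteq> wheel_E n v x"
      using wheel_resolves_iff resolving u v \<open>u \<noteq> v\<close>
      unfolding nonlocal_resolving_def wheel_V_def by auto
    moreover have "x \<noteq> 0"
      using calculation u v wheel_center_adjacent[of u n] wheel_center_adjacent[of v n]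
      by (cases "x = 0") (auto simp: wheel_V_def)
    moreover have "x \<noteq> u" "x \<noteq> v"
      using calculation(1) u v by auto
    ultimately have "x \<in> X \<inter> {1..n}" "wheel_E n u x \<noteq> wheel_E n v x"
      using resolving unfolding nonlocal_resolving_def wheel_V_def by auto
    then show "{x \<in> X \<inter> {1..n}. wheel_E n u x} \<noteq> {x \<in> X \<inter> {1..n}. wheel_E n v x}"
      by blast
  qed
  from card_lower_bound show ?thesis by simp
qed

lemma nat_mod5_cases:
  fixes m :: nat
  obtains q where "m = 5 * q" | q where "m = 5 * q + 1" | q where "m = 5 * q + 2"
    | q where "m = 5 * q + 3" | q where "m = 5 * q + 4"
proof -
  have m: "m = 5 * (m div 5) + m mod 5" by simp
  have "m mod 5 < 5" by simp
  then consider "m mod 5 = 0" | "m mod 5 = 1" | "m mod 5 = 2" | "m mod 5 = 3" | "m mod 5 = 4"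
    by linarith
  then show ?thesis
    by cases (use m that in \<open>metis add_0_right\<close>)+
qed

definition mod5_marks :: "nat \<Rightarrow> nat set" where
  "mod5_marks m = {i \<in> {1..m}. i mod 5 = 0 \<or> i mod 5 = 3}"

lemma card_mod5_marks: "card (mod5_marks m) = m div 5 + (m + 2) div 5"
proof (induction m)
  case 0
  then show ?case by (simp add: mod5_marks_def)
next
  case (Suc m)
  let ?marked = "Suc m mod 5 = 0 \<or> Suc m mod 5 = 3"
  have step: "mod5_marks (Suc m) = (if ?marked then insert (Suc m) (mod5_marks m) else mod5_marks m)"
    unfolding mod5_marks_def by (auto simp: le_Suc_eq)
  have "Suc m \<notin> mod5_marks m" "finite (mod5_marks m)"
    unfolding mod5_marks_def by auto
  then have "card (mod5_marks (Suc m)) = m div 5 + (m + 2) div 5 + (if ?marked then 1 else 0)"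
    using Suc.IH by (simp add: step)
  also have "\<dots> = Suc m div 5 + (Suc m + 2) div 5"
    by (cases m rule: nat_mod5_cases; simp; presburger)
  finally show ?case .
qed

text \<open>The vertices n - 2 and n repair the pattern at the wrap-around from n to 1.\<close>

definition wheel_basis :: "nat \<Rightarrow> nat set" where
  "wheel_basis n = mod5_marks (n - 2) \<union> {n - 2} \<union> (if 5 dvd n then {n} else {})"

lemma card_wheel_basis:
  assumes "3 \<le> n"
  shows "card (wheel_basis n) = 2 * n div 5"
proof -
  define w where "w = n - 2"
  have n: "n = w + 2" "1 \<le> w" unfolding w_def using assms by auto
  have "w \<in> mod5_marks w \<longleftrightarrow> w mod 5 = 0 \<or> w mod 5 = 3" "n \<notin> insert w (mod5_marks w)"
    using n unfolding mod5_marks_def by auto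
  moreover have "finite (mod5_marks w)" unfolding mod5_marks_def by simp
  moreover have "wheel_basis n = insert w (mod5_marks w) \<union> (if 5 dvd n then {n} else {})"
    unfolding wheel_basis_def w_def by auto
  ultimately have "card (wheel_basis n) = w div 5 + (w + 2) div 5
      + (if w mod 5 = 0 \<or> w mod 5 = 3 then 0 else 1) + (if 5 dvd (w + 2) then 1 else 0)"
    by (simp add: card_insert_if card_mod5_marks n(1))
  also have "\<dots> = 2 * n div 5"
    unfolding n(1) by (cases w rule: nat_mod5_cases; simp; presburger)
  finally show ?thesis .
qed

lemma wheel_basis_subset: "3 \<le> n \<Longrightarrow> wheel_basis n \<subseteq> {1..n}"
  unfolding wheel_basis_def mod5_marks_def by auto

lemma mod5_mem_wheel_basis:
  "1 \<le> i \<Longrightarrow> i \<le> n - 2 \<Longrightarrow> i mod 5 = 0 \<or> i mod 5 = 3 \<Longrightarrow> i \<in> wheel_basis n"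
  unfolding wheel_basis_def mod5_marks_def by auto

lemma diff_2_mem_wheel_basis: "n - 2 \<in> wheel_basis n"
  unfolding wheel_basis_def by simp

lemma self_mem_wheel_basis: "5 dvd n \<Longrightarrow> n \<in> wheel_basis n"
  unfolding wheel_basis_def by simp

lemma mod_diff_1_eq:
  fixes w :: nat
  assumes "w mod m = Suc r"
  shows "(w - 1) mod m = r"
proof -
  have "w = m * (w div m) + Suc r" using assms mult_div_mod_eq[of m w] by simp
  then have "w - 1 = r + m * (w div m)" by simp
  moreover have "r < m \<or> m = 0" using assms mod_less_divisor[of m w] by (cases m) auto
  ultimately show ?thesis using assms by auto
qed

lemma wheel_basis_neighbour:
  assumes "2 \<le> w" "w \<le> n - 3" "w \<notin> wheel_basis n"
  shows "w mod 5 \<noteq> 2 \<and> w - 1 \<in> wheel_basis n \<or> w mod 5 = 2 \<and> w + 1 \<in> wheel_basis n"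
proof -
  have "1 \<le> w" "w \<le> n - 2" using assms(1,2) by linarith+
  then have "w mod 5 \<noteq> 0 \<and> w mod 5 \<noteq> 3"
    using assms(3) mod5_mem_wheel_basis[of w n] by metis
  moreover have "w mod 5 < 5" by simp
  ultimately consider "w mod 5 = 1 \<or> w mod 5 = 4" | "w mod 5 = 2" by linarith
  then show ?thesis
  proof cases
    case 1
    then have "(w - 1) mod 5 = 0 \<or> (w - 1) mod 5 = 3"
      using mod_diff_1_eq[of w 5 0] mod_diff_1_eq[of w 5 3] by auto
    then show ?thesis using 1 assms mod5_mem_wheel_basis[of "w - 1" n] by auto
  next
    case 2
    then have "(w + 1) mod 5 = 3" by (simp add: mod_Suc)
    then show ?thesis using 2 assms mod5_mem_wheel_basis[of "w + 1" n] by auto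
  qed
qed

lemma wheel_basis_separates:
  assumes "7 \<le> n" "1 \<le> u" "u < v" "v \<le> n" "\<not> wheel_E n u v"
    and u_notin: "u \<notin> wheel_basis n" and v_notin: "v \<notin> wheel_basis n"
  shows "\<exists>x \<in> wheel_basis n. wheel_E n u x \<noteq> wheel_E n v x"
proof -
  let ?B = "wheel_basis n"
  have B_rim: "?B \<subseteq> {1..n}" using assms(1) by (intro wheel_basis_subset) simp
  have far: "u + 2 \<le> v" "\<not> (u = 1 \<and> v = n)"
    using assms(2-5) unfolding wheel_E_def by auto
  have "u \<noteq> n - 2" using u_notin diff_2_mem_wheel_basis by metis
  with far assms(4) have u_le: "u \<le> n - 3" by linarith
  have below_u: ?thesis if "u - 1 \<in> ?B" "3 \<le> u"
    using that far assms(4) by (intro bexI[of _ "u - 1"]) (auto simp: wheel_E_def)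
  have above_u: ?thesis if "u + 1 \<in> ?B" "v \<noteq> u + 2"
    using that far assms(2,4) by (intro bexI[of _ "u + 1"]) (auto simp: wheel_E_def)
  have below_v: ?thesis if "v - 1 \<in> ?B" "v \<noteq> u + 2"
    using that far assms(2,4) by (intro bexI[of _ "v - 1"]) (auto simp: wheel_E_def)
  have above_v: ?thesis if "v + 1 \<in> ?B" "\<not> (u = 1 \<and> v + 1 = n)"
    using that far assms(2) B_rim by (intro bexI[of _ "v + 1"]) (auto simp: wheel_E_def)
  show ?thesis
  proof (cases "u = 1")
    case False
    with assms(2) have "2 \<le> u" by simp
    from wheel_basis_neighbour[OF this u_le u_notin]
    consider (lower) "u mod 5 \<noteq> 2" "u - 1 \<in> ?B" | (upper) "u mod 5 = 2" "u + 1 \<in> ?B"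
      by blast
    then show ?thesis
    proof cases
      case lower
      then have "u \<noteq> 2" by auto
      with \<open>2 \<le> u\<close> lower show ?thesis by (intro below_u) auto
    next
      case upper
      show ?thesis
      proof (cases "v = u + 2")
        case v: True
        have "v \<noteq> n - 2" using v_notin diff_2_mem_wheel_basis by metis
        with u_le v assms(1) have "v + 1 \<le> n - 2 \<or> v + 1 = n" by linarith
        moreover have "(v + 1) mod 5 = 0" using upper v by (simp add: mod_Suc)
        ultimately have "v + 1 \<in> ?B"
          using mod5_mem_wheel_basis[of "v + 1" n] self_mem_wheel_basis[of n]
          by (auto simp: dvd_eq_mod_eq_0)
        then show ?thesis using False by (intro above_v) auto
      qed (use upper above_u in simp)
    qed
  next
    case True
    show ?thesis
    proof (cases "v = n - 1")
      case True
      with assms(1) have "v - 1 = n - 2" by linarith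
      then have "v - 1 \<in> ?B" using diff_2_mem_wheel_basis by simp
      moreover have "v \<noteq> u + 2" using True \<open>u = 1\<close> assms(1) by linarith
      ultimately show ?thesis by (rule below_v)
    next
      case False
      have "v \<noteq> n - 2" using v_notin diff_2_mem_wheel_basis by metis
      with False far assms(4) \<open>u = 1\<close> have "3 \<le> v" "v \<le> n - 3" by linarith+
      have "3 \<in> ?B" using assms(1) by (intro mod5_mem_wheel_basis) auto
      with v_notin have "v \<noteq> 3" by blast
      from wheel_basis_neighbour[OF _ \<open>v \<le> n - 3\<close> v_notin] \<open>3 \<le> v\<close>
      consider (lower) "v - 1 \<in> ?B" | (upper) "v + 1 \<in> ?B" by auto
      then show ?thesis
      proof cases
        case lower
        then show ?thesis using \<open>u = 1\<close> \<open>v \<noteq> 3\<close> by (intro below_v) auto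
      next
        case upper
        moreover have "v + 1 \<noteq> n" using \<open>v \<le> n - 3\<close> assms(1) by linarith
        ultimately show ?thesis by (intro above_v) auto
      qed
    qed
  qed
qed

lemma wheel_basis_nonlocal_resolving:
  assumes "7 \<le> n"
  shows "nonlocal_resolving (wheel_V n) (wheel_E n) (wheel_basis n)"
  unfolding nonlocal_resolving_def
proof (intro conjI ballI impI)
  show B_sub: "wheel_basis n \<subseteq> wheel_V n"
    using wheel_basis_subset[of n] assms unfolding wheel_V_def by auto
  fix u v assume "u \<in> wheel_V n" "v \<in> wheel_V n" and uv: "u \<noteq> v \<and> \<not> wheel_E n u v"
  then have rim: "u \<in> {1..n}" "v \<in> {1..n}" using wheel_nonadjacent_on_rim by blast+
  have "\<exists>x \<in> wheel_basis n. x = u \<or> x = v \<or> wheel_E n u x \<noteq> wheel_E n v x"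
  proof (cases "u \<in> wheel_basis n \<or> v \<in> wheel_basis n")
    case False
    show ?thesis
    proof (cases "u < v")
      case True
      with assms rim uv False show ?thesis by (metis atLeastAtMost_iff wheel_basis_separates)
    next
      case False
      with uv have "v < u" by simp
      moreover have "\<not> wheel_E n v u" using uv wheel_E_sym by blast
      ultimately show ?thesis
        using assms rim \<open>\<not> (u \<in> wheel_basis n \<or> v \<in> wheel_basis n)\<close>
          wheel_basis_separates[of n v u]
        by auto
    qed
  qed blast
  then show "resolves (wheel_V n) (wheel_E n) (wheel_basis n) u v"
    using wheel_resolves_iff[OF B_sub \<open>u \<in> wheel_V n\<close> \<open>v \<in> wheel_V n\<close>] uv by blast
qed

theorem theorem4p1:
  fixes n :: nat
  assumes "n \<ge> 7"
  shows "nl_dim (wheel_V n) (wheel_E n) = (2 * n) div 5"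
  unfolding nl_dim_def
proof (rule Least_equality)
  have "finite (wheel_basis n)"
    using wheel_basis_subset[of n] assms finite_subset by auto
  then show "\<exists>X. nonlocal_resolving (wheel_V n) (wheel_E n) X \<and> finite X \<and> card X = 2 * n div 5"
    using wheel_basis_nonlocal_resolving[OF assms] card_wheel_basis assms
    by (intro exI[of _ "wheel_basis n"]) simp
next
  fix k assume "\<exists>X. nonlocal_resolving (wheel_V n) (wheel_E n) X \<and> finite X \<and> card X = k"
  then obtain X where "nonlocal_resolving (wheel_V n) (wheel_E n) X" "finite X" "card X = k"
    by blast
  then have "2 * n \<le> 5 * card (X \<inter> {1..n}) + 4" "card (X \<inter> {1..n}) \<le> k"
    using wheel_nonlocal_resolving_card_ge[of n X] assms by (auto intro: card_mono)
  then show "2 * n div 5 \<le> k" by linarith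
qed

end
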